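(* Let $P\subset\mathbb{R}^d$ be a $(0,1)$-polytope. Then, after a change of coordinates, $P=P_1\times\cdots\times P_s$ for some indecomposable $(0,1)$-polytopes $P_1,\ldots,P_s$.
   Context: A $(0,1)$-polytope is a polytope all of whose vertices lie in $\{0,1\}^d$. A lattice polytope is (Minkowski) indecomposable if it is not a single point and whenever it equals $P_1+P_2$ (Minkowski sum) with $P_1,P_2$ lattice polytopes, one of $P_1,P_2$ is a single point. $\times$ denotes direct product of polytopes; a Minkowski sum $P'+Q'$ of polytopes in $\mathbb{R}^d$ such that, for every coordinate $i$, the projection of $P'$ or of $Q'$ to the $i$-th coordinate is $\{0\}$, is regarded as the direct product of these polytopes (in the respective coordinate subspaces). *)

theory Defs
  imports "HOL-Analysis.Analysis"
begin

text \<open>Polytopes in R^d, modelled as subsets of real^'n (d = CARD('n)).\<close>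

definition lattice_polytope :: "(real^'n) set \<Rightarrow> bool" where
  "lattice_polytope P \<longleftrightarrow> polytope P \<and> P \<noteq> {} \<and>
     (\<forall>v. v extreme_point_of P \<longrightarrow> (\<forall>i. v $ i \<in> \<int>))"

definition zero_one_polytope :: "(real^'n) set \<Rightarrow> bool" where
  "zero_one_polytope P \<longleftrightarrow> polytope P \<and> P \<noteq> {} \<and>
     (\<forall>v. v extreme_point_of P \<longrightarrow> (\<forall>i. v $ i \<in> {0, 1}))"

definition minkowski_sum :: "(real^'n) set \<Rightarrow> (real^'n) set \<Rightarrow> (real^'n) set" where
  "minkowski_sum A B = {x + y | x y. x \<in> A \<and> y \<in> B}"

definition is_single_point :: "(real^'n) set \<Rightarrow> bool" where
  "is_single_point A \<longleftrightarrow> (\<exists>a. A = {a})"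

definition lattice_indecomposable :: "(real^'n) set \<Rightarrow> bool" where
  "lattice_indecomposable P \<longleftrightarrow> \<not> is_single_point P \<and>
     (\<forall>P1 P2. lattice_polytope P1 \<and> lattice_polytope P2 \<and> P = minkowski_sum P1 P2
        \<longrightarrow> is_single_point P1 \<or> is_single_point P2)"

definition coord_zero :: "(real^'n) set \<Rightarrow> 'n \<Rightarrow> bool" where
  "coord_zero A i \<longleftrightarrow> (\<forall>x\<in>A. x $ i = 0)"

text \<open>Direct product of polytopes in complementary coordinate subspaces, realised as
  the Minkowski sum of factors with pairwise disjoint coordinate supports (empty product = {0}).\<close>
definition direct_product :: "(real^'n) set list \<Rightarrow> (real^'n) set" where
  "direct_product Ps = foldr minkowski_sum Ps {0}"

definition disjoint_supports :: "(real^'n) set list \<Rightarrow> bool" where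
  "disjoint_supports Ps \<longleftrightarrow> (\<forall>j<length Ps. \<forall>k<length Ps. j \<noteq> k \<longrightarrow>
      (\<forall>i. coord_zero (Ps ! j) i \<or> coord_zero (Ps ! k) i))"

end

theory Submission
  imports Defs
begin

(* The vertices of a lattice polytope are integral, so on each coordinate that is not constant
   on it, a lattice polytope varies by at least 1. In a lattice decomposition P = A + B of a
   0/1-polytope no coordinate can therefore vary on both A and B, for it would range over an
   interval of length 2 on P. Translate P so that its constant coordinates vanish; then P is the
   Minkowski sum of its coordinate projections onto the varying coordinates of A and of B, two
   0/1-polytopes with fewer varying coordinates, and induction on the number of varying
   coordinates splits P into indecomposable factors with disjoint coordinate supports. *)

definition varying_coords :: "(real^'n) set \<Rightarrow> 'n set" where
  "varying_coords A = {i. \<exists>x\<in>A. \<exists>y\<in>A. x$i \<noteq> y$i}"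

definition coord_support :: "(real^'n) set \<Rightarrow> 'n set" where
  "coord_support A = {i. \<not> coord_zero A i}"

definition coord_proj :: "'n set \<Rightarrow> real^'n \<Rightarrow> real^'n" where
  "coord_proj S x = (\<chi> i. if i \<in> S then x$i else 0)"

lemma linear_coord_proj: "linear (coord_proj S)"
  by (rule linearI) (auto simp: coord_proj_def vec_eq_iff)

lemma convex_coord_slab: "convex {x::real^'n. a \<le> x$i \<and> x$i \<le> b}"
proof -
  have "{x::real^'n. a \<le> x$i \<and> x$i \<le> b} = {x. axis i 1 \<bullet> x \<ge> a} \<inter> {x. axis i 1 \<bullet> x \<le> b}"
    by (auto simp: inner_axis')
  then show ?thesis by (simp add: convex_Int convex_halfspace_ge convex_halfspace_le)
qed

lemma polytope_eq_convex_hull_extreme_points: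
  fixes A :: "'a::euclidean_space set"
  assumes "polytope A"
  shows "A = convex hull {v. v extreme_point_of A}"
  using Krein_Milman_Minkowski[OF polytope_imp_compact[OF assms] polytope_imp_convex[OF assms]] .

lemma polytope_subset_convex_if_extreme_points:
  fixes A :: "'a::euclidean_space set"
  assumes "polytope A" "convex C" "\<And>v. v extreme_point_of A \<Longrightarrow> v \<in> C"
  shows "A \<subseteq> C"
proof -
  have "A = convex hull {v. v extreme_point_of A}"
    using assms(1) by (rule polytope_eq_convex_hull_extreme_points)
  also have "\<dots> \<subseteq> C"
    by (rule hull_minimal) (use assms(2,3) in auto)
  finally show ?thesis .
qed

lemma extreme_point_exists_polytope:
  fixes A :: "'a::euclidean_space set"
  assumes "polytope A" "A \<noteq> {}"
  obtains v where "v extreme_point_of A"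
  using extreme_point_exists_convex[OF polytope_imp_compact polytope_imp_convex] assms
  by blast

lemma extreme_point_of_linear_image_polytope:
  fixes f :: "'a::euclidean_space \<Rightarrow> 'b::euclidean_space"
  assumes "linear f" "polytope P" "w extreme_point_of (f ` P)"
  shows "w \<in> f ` {v. v extreme_point_of P}"
proof -
  have "f ` P = f ` (convex hull {v. v extreme_point_of P})"
    using polytope_eq_convex_hull_extreme_points[OF assms(2)] by (rule arg_cong)
  also have "\<dots> = convex hull (f ` {v. v extreme_point_of P})"
    using assms(1) by (rule convex_hull_linear_image)
  finally show ?thesis
    using assms(3) extreme_point_of_convex_hull by simp
qed

lemma zero_one_polytope_coord_bounds:
  assumes "zero_one_polytope A" "x \<in> A"
  shows "0 \<le> x$i \<and> x$i \<le> 1"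
proof -
  have A: "polytope A" and vert: "\<And>v. v extreme_point_of A \<Longrightarrow> v$i \<in> {0, 1}"
    using assms(1) by (auto simp: zero_one_polytope_def)
  have "A \<subseteq> {x. 0 \<le> x$i \<and> x$i \<le> 1}"
    using vert by (intro polytope_subset_convex_if_extreme_points[OF A convex_coord_slab]) fastforce
  then show ?thesis using assms(2) by blast
qed

text \<open>Otherwise all vertices, hence the whole polytope, would lie in one hyperplane x_i = c;
  distinct integers differ by at least 1.\<close>
lemma lattice_polytope_varying_coord_gap:
  assumes "lattice_polytope A" "i \<in> varying_coords A"
  obtains y y' where "y \<in> A" "y' \<in> A" "y$i + 1 \<le> y'$i"
proof -
  have A: "polytope A" "A \<noteq> {}" and int: "\<And>v. v extreme_point_of A \<Longrightarrow> v$i \<in> \<int>"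
    using assms(1) by (auto simp: lattice_polytope_def)
  obtain v where v: "v extreme_point_of A" using extreme_point_exists_polytope[OF A] .
  have "\<exists>w. w extreme_point_of A \<and> w$i \<noteq> v$i"
  proof (rule ccontr)
    assume "\<nexists>w. w extreme_point_of A \<and> w$i \<noteq> v$i"
    then have "A \<subseteq> {x. v$i \<le> x$i \<and> x$i \<le> v$i}"
      by (intro polytope_subset_convex_if_extreme_points[OF A(1) convex_coord_slab]) auto
    then have "\<forall>x\<in>A. x$i = v$i" by fastforce
    then show False using assms(2) by (auto simp: varying_coords_def)
  qed
  then obtain w where w: "w extreme_point_of A" "w$i \<noteq> v$i" by blast
  have "v$i + 1 \<le> w$i \<or> w$i + 1 \<le> v$i"
    using int[OF v] int[OF w(1)] w(2) by (auto elim!: Ints_cases)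
  moreover have "v \<in> A" "w \<in> A" using v w(1) by (auto simp: extreme_point_of_def)
  ultimately show thesis using that by blast
qed

lemma minkowski_sum_commute: "minkowski_sum A B = minkowski_sum B A"
  unfolding minkowski_sum_def by (auto, metis add.commute, metis add.commute)

lemma minkowski_sum_zero_left: "minkowski_sum {0} A = A"
  by (auto simp: minkowski_sum_def)

lemma minkowski_sum_assoc:
  "minkowski_sum (minkowski_sum A B) C = minkowski_sum A (minkowski_sum B C)"
  unfolding minkowski_sum_def by (auto, metis add.assoc, metis add.assoc)

lemma direct_product_append:
  "direct_product (As @ Bs) = minkowski_sum (direct_product As) (direct_product Bs)"
  by (induction As) (auto simp: direct_product_def minkowski_sum_zero_left minkowski_sum_assoc)

lemma direct_product_singleton: "direct_product [A] = A"
  by (auto simp: direct_product_def minkowski_sum_def)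

lemma varying_coords_subset_minkowski_sum:
  assumes "B \<noteq> {}"
  shows "varying_coords A \<subseteq> varying_coords (minkowski_sum A B)"
proof
  fix i assume "i \<in> varying_coords A"
  then obtain x y where "x \<in> A" "y \<in> A" "x$i \<noteq> y$i" by (auto simp: varying_coords_def)
  moreover obtain z where "z \<in> B" using assms by blast
  ultimately have "x + z \<in> minkowski_sum A B" "y + z \<in> minkowski_sum A B" "(x + z)$i \<noteq> (y + z)$i"
    by (auto simp: minkowski_sum_def)
  then show "i \<in> varying_coords (minkowski_sum A B)" unfolding varying_coords_def by blast
qed

lemma varying_coords_minkowski_sum:
  assumes "A \<noteq> {}" "B \<noteq> {}"
  shows "varying_coords (minkowski_sum A B) = varying_coords A \<union> varying_coords B"
proof
  show "varying_coords (minkowski_sum A B) \<subseteq> varying_coords A \<union> varying_coords B"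
  proof
    fix i assume "i \<in> varying_coords (minkowski_sum A B)"
    then obtain x x' where "x \<in> minkowski_sum A B" "x' \<in> minkowski_sum A B" "x$i \<noteq> x'$i"
      unfolding varying_coords_def by blast
    then obtain y z y' z' where yz: "y \<in> A" "z \<in> B" "y' \<in> A" "z' \<in> B"
      and "(y + z)$i \<noteq> (y' + z')$i"
      unfolding minkowski_sum_def by blast
    then have "y$i \<noteq> y'$i \<or> z$i \<noteq> z'$i" by auto
    then show "i \<in> varying_coords A \<union> varying_coords B"
      using yz(1-4) unfolding varying_coords_def by blast
  qed
  show "varying_coords A \<union> varying_coords B \<subseteq> varying_coords (minkowski_sum A B)"
    using varying_coords_subset_minkowski_sum[of B A] varying_coords_subset_minkowski_sum[of A B]
      assms minkowski_sum_commute[of A B] by simp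
qed

lemma varying_coords_empty_iff:
  assumes "A \<noteq> {}"
  shows "varying_coords A = {} \<longleftrightarrow> is_single_point A"
proof
  assume "varying_coords A = {}"
  then have eq: "x = y" if "x \<in> A" "y \<in> A" for x y
    using that unfolding varying_coords_def vec_eq_iff by blast
  obtain a where "a \<in> A" using assms by blast
  with eq have "A = {a}" by blast
  then show "is_single_point A" by (auto simp: is_single_point_def)
qed (auto simp: is_single_point_def varying_coords_def)

lemma varying_coords_disjoint_if_zero_one_sum:
  assumes "lattice_polytope A" "lattice_polytope B" "zero_one_polytope (minkowski_sum A B)"
  shows "varying_coords A \<inter> varying_coords B = {}"
proof (rule ccontr)
  assume "varying_coords A \<inter> varying_coords B \<noteq> {}"
  then obtain i where i: "i \<in> varying_coords A" "i \<in> varying_coords B" by blast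
  obtain y y' where y: "y \<in> A" "y' \<in> A" "y$i + 1 \<le> y'$i"
    using lattice_polytope_varying_coord_gap[OF assms(1) i(1)] .
  obtain z z' where z: "z \<in> B" "z' \<in> B" "z$i + 1 \<le> z'$i"
    using lattice_polytope_varying_coord_gap[OF assms(2) i(2)] .
  have "y + z \<in> minkowski_sum A B" "y' + z' \<in> minkowski_sum A B"
    using y z by (auto simp: minkowski_sum_def)
  then have "0 \<le> (y + z)$i" "(y' + z')$i \<le> 1"
    using zero_one_polytope_coord_bounds[OF assms(3)] by blast+
  then show False using y(3) z(3) by simp
qed

lemma zero_one_polytope_coord_proj:
  assumes "zero_one_polytope P"
  shows "zero_one_polytope (coord_proj S ` P)"
proof -
  have P: "polytope P" "P \<noteq> {}" and vert: "\<And>v i. v extreme_point_of P \<Longrightarrow> v$i \<in> {0, 1}"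
    using assms by (auto simp: zero_one_polytope_def)
  have "w$i \<in> {0, 1}" if w: "w extreme_point_of (coord_proj S ` P)" for w i
  proof -
    obtain v where "v extreme_point_of P" "w = coord_proj S v"
      using extreme_point_of_linear_image_polytope[OF linear_coord_proj P(1) w] by blast
    then show ?thesis using vert[of v i] by (simp add: coord_proj_def)
  qed
  then show ?thesis using P polytope_linear_image[OF linear_coord_proj P(1)]
    by (auto simp: zero_one_polytope_def)
qed

lemma varying_coords_coord_proj:
  assumes "S \<subseteq> varying_coords A"
  shows "varying_coords (coord_proj S ` A) = S"
  using assms by (auto simp: varying_coords_def coord_proj_def)

lemma coord_support_coord_proj: "coord_support (coord_proj S ` A) \<subseteq> S \<inter> coord_support A"
  by (auto simp: coord_support_def coord_zero_def coord_proj_def)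

lemma coord_support_coord_proj_subset_varying_coords:
  assumes "S \<subseteq> varying_coords A"
  shows "coord_support (coord_proj S ` A) \<subseteq> varying_coords (coord_proj S ` A)"
  using coord_support_coord_proj[of S A] varying_coords_coord_proj[OF assms] by blast

lemma is_single_point_eq_zero:
  assumes "is_single_point A" "coord_support A \<subseteq> varying_coords A"
  shows "A = {0}"
  using assms by (auto simp: is_single_point_def varying_coords_def coord_support_def
      coord_zero_def vec_eq_iff)

lemma coord_proj_add_disjoint:
  assumes "S \<inter> T = {}"
  shows "coord_proj S x + coord_proj T x = coord_proj (S \<union> T) x"
  using assms by (auto simp: vec_eq_iff coord_proj_def)

lemma coord_proj_eq_self:
  assumes "x \<in> A" "coord_support A \<subseteq> S"
  shows "coord_proj S x = x"
  using assms by (auto simp: vec_eq_iff coord_proj_def coord_support_def coord_zero_def)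

text \<open>For x = y + z and x' = y' + z' the witness is u = y + z': each summand is constant off
  its own varying coordinates.\<close>
lemma coord_proj_mix_minkowski_sum:
  assumes "x \<in> minkowski_sum A B" "x' \<in> minkowski_sum A B"
    and disj: "varying_coords A \<inter> varying_coords B = {}"
  obtains u where "u \<in> minkowski_sum A B"
    "coord_proj (varying_coords A) x + coord_proj (varying_coords B) x'
       = coord_proj (varying_coords A \<union> varying_coords B) u"
proof -
  obtain y z y' z' where yz: "y \<in> A" "z \<in> B" "y' \<in> A" "z' \<in> B"
    and x: "x = y + z" "x' = y' + z'"
    using assms(1,2) unfolding minkowski_sum_def by blast
  have "(coord_proj (varying_coords A) x + coord_proj (varying_coords B) x')$i
      = coord_proj (varying_coords A \<union> varying_coords B) (y + z')$i" for i
  proof (cases "i \<in> varying_coords A")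
    case True
    then have "i \<notin> varying_coords B" using disj by blast
    then have "z$i = z'$i" using yz(2,4) unfolding varying_coords_def by blast
    then show ?thesis using True \<open>i \<notin> varying_coords B\<close> by (simp add: x coord_proj_def)
  next
    case False
    then have "y$i = y'$i" using yz(1,3) unfolding varying_coords_def by blast
    then show ?thesis using False by (simp add: x coord_proj_def)
  qed
  moreover have "y + z' \<in> minkowski_sum A B" using yz unfolding minkowski_sum_def by blast
  ultimately show thesis using that by (simp add: vec_eq_iff)
qed

lemma minkowski_sum_eq_coord_proj_sum:
  assumes P: "P = minkowski_sum A B" and ne: "A \<noteq> {}" "B \<noteq> {}"
    and disj: "varying_coords A \<inter> varying_coords B = {}"
    and supp: "coord_support P \<subseteq> varying_coords P"
  shows "P = minkowski_sum (coord_proj (varying_coords A) ` P) (coord_proj (varying_coords B) ` P)"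
    (is "P = minkowski_sum (?pA ` P) (?pB ` P)")
proof
  have var: "varying_coords P = varying_coords A \<union> varying_coords B"
    using varying_coords_minkowski_sum[OF ne] by (simp add: P)
  have self: "coord_proj (varying_coords A \<union> varying_coords B) x = x" if "x \<in> P" for x
    using coord_proj_eq_self[OF that supp] by (simp add: var)
  show "P \<subseteq> minkowski_sum (?pA ` P) (?pB ` P)"
  proof
    fix x assume x: "x \<in> P"
    have "x = ?pA x + ?pB x" using self[OF x] coord_proj_add_disjoint[OF disj] by simp
    then show "x \<in> minkowski_sum (?pA ` P) (?pB ` P)"
      using x unfolding minkowski_sum_def by blast
  qed
  show "minkowski_sum (?pA ` P) (?pB ` P) \<subseteq> P"
  proof
    fix w assume "w \<in> minkowski_sum (?pA ` P) (?pB ` P)"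
    then obtain x x' where "x \<in> P" "x' \<in> P" and w: "w = ?pA x + ?pB x'"
      unfolding minkowski_sum_def by blast
    then obtain u where "u \<in> P" "w = coord_proj (varying_coords A \<union> varying_coords B) u"
      using coord_proj_mix_minkowski_sum[of x A B x'] disj unfolding P by metis
    then show "w \<in> P" using self by simp
  qed
qed

lemma decomposable_zero_one_polytope_split:
  assumes "zero_one_polytope P" "coord_support P \<subseteq> varying_coords P"
    and "\<not> is_single_point P" "\<not> lattice_indecomposable P"
  obtains S T where "S \<inter> T = {}" "S \<noteq> {}" "T \<noteq> {}" "varying_coords P = S \<union> T"
    "P = minkowski_sum (coord_proj S ` P) (coord_proj T ` P)"
proof -
  obtain A B where AB: "lattice_polytope A" "lattice_polytope B" "P = minkowski_sum A B"
      and single: "\<not> is_single_point A" "\<not> is_single_point B"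
    using assms(3,4) unfolding lattice_indecomposable_def by blast
  have ne: "A \<noteq> {}" "B \<noteq> {}" using AB(1,2) by (auto simp: lattice_polytope_def)
  have disj: "varying_coords A \<inter> varying_coords B = {}"
    using varying_coords_disjoint_if_zero_one_sum[OF AB(1,2)] AB(3) assms(1) by simp
  show thesis
  proof (rule that[OF disj])
    show "varying_coords A \<noteq> {}" "varying_coords B \<noteq> {}"
      using single ne varying_coords_empty_iff by auto
    show "varying_coords P = varying_coords A \<union> varying_coords B"
      using AB(3) varying_coords_minkowski_sum[OF ne] by simp
    show "P = minkowski_sum (coord_proj (varying_coords A) ` P) (coord_proj (varying_coords B) ` P)"
      using minkowski_sum_eq_coord_proj_sum[OF AB(3) ne disj assms(2)] .
  qed
qed

lemma disjoint_supports_iff: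
  "disjoint_supports Ps \<longleftrightarrow> (\<forall>j<length Ps. \<forall>k<length Ps. j \<noteq> k \<longrightarrow>
     coord_support (Ps ! j) \<inter> coord_support (Ps ! k) = {})"
  by (auto simp: disjoint_supports_def coord_support_def)

lemma disjoint_supports_append:
  assumes "disjoint_supports As" "disjoint_supports Bs"
    and cross: "\<And>A B. A \<in> set As \<Longrightarrow> B \<in> set Bs \<Longrightarrow> coord_support A \<inter> coord_support B = {}"
  shows "disjoint_supports (As @ Bs)"
  unfolding disjoint_supports_iff
proof (intro allI impI)
  fix j k assume jk: "j < length (As @ Bs)" "k < length (As @ Bs)" "j \<noteq> k"
  consider "j < length As" "k < length As" | "length As \<le> j" "length As \<le> k"
    | "j < length As" "length As \<le> k" | "length As \<le> j" "k < length As"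
    by linarith
  then show "coord_support ((As @ Bs) ! j) \<inter> coord_support ((As @ Bs) ! k) = {}"
  proof cases
    case 1
    then show ?thesis using assms(1) jk(3) by (simp add: nth_append disjoint_supports_iff)
  next
    case 2
    then show ?thesis using assms(2) jk by (simp add: nth_append disjoint_supports_iff)
  next
    case 3
    then show ?thesis using cross jk by (simp add: nth_append)
  next
    case 4
    then have "As ! k \<in> set As" "Bs ! (j - length As) \<in> set Bs" using jk by auto
    then show ?thesis using cross 4 by (simp add: nth_append Int_commute)
  qed
qed

text \<open>The support bound is what keeps the factors of the two halves of a decomposition apart.\<close>
definition indecomposable_factorization :: "(real^'n) set list \<Rightarrow> (real^'n) set \<Rightarrow> bool" where
  "indecomposable_factorization Ps P \<longleftrightarrow>
     (\<forall>Q\<in>set Ps. zero_one_polytope Q \<and> lattice_indecomposable Q \<and> coord_support Q \<subseteq> coord_support P) \<and>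
     disjoint_supports Ps \<and> P = direct_product Ps"

lemma coord_support_subset_minkowski_sum:
  assumes "B \<noteq> {}" "coord_support A \<inter> coord_support B = {}"
  shows "coord_support A \<subseteq> coord_support (minkowski_sum A B)"
proof
  fix i assume i: "i \<in> coord_support A"
  then obtain x where "x \<in> A" "x$i \<noteq> 0" by (auto simp: coord_support_def coord_zero_def)
  moreover obtain z where "z \<in> B" using assms(1) by blast
  moreover have "z$i = 0"
    using i assms(2) \<open>z \<in> B\<close> by (auto simp: coord_support_def coord_zero_def)
  ultimately have "x + z \<in> minkowski_sum A B" "(x + z)$i \<noteq> 0"
    by (auto simp: minkowski_sum_def)
  then show "i \<in> coord_support (minkowski_sum A B)"
    unfolding coord_support_def coord_zero_def by blast
qed

lemma indecomposable_factorization_append: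
  assumes "A \<noteq> {}" "B \<noteq> {}" "coord_support A \<inter> coord_support B = {}"
    and As: "indecomposable_factorization As A" and Bs: "indecomposable_factorization Bs B"
  shows "indecomposable_factorization (As @ Bs) (minkowski_sum A B)"
proof -
  have "coord_support A \<subseteq> coord_support (minkowski_sum A B)"
    "coord_support B \<subseteq> coord_support (minkowski_sum A B)"
    using coord_support_subset_minkowski_sum[of B A] coord_support_subset_minkowski_sum[of A B]
      assms(1-3) minkowski_sum_commute[of A B] by (auto simp: Int_commute)
  moreover have "coord_support Q \<subseteq> coord_support A \<or> coord_support Q \<subseteq> coord_support B"
    and "zero_one_polytope Q \<and> lattice_indecomposable Q" if "Q \<in> set (As @ Bs)" for Q
    using that As Bs by (auto simp: indecomposable_factorization_def)
  moreover have "disjoint_supports (As @ Bs)"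
    using assms(3) As Bs unfolding indecomposable_factorization_def
    by (intro disjoint_supports_append) blast+
  moreover have "minkowski_sum A B = direct_product (As @ Bs)"
    using As Bs by (simp add: indecomposable_factorization_def direct_product_append)
  ultimately show ?thesis
    unfolding indecomposable_factorization_def by blast
qed

lemma zero_one_polytope_indecomposable_factorization:
  assumes "zero_one_polytope P" "coord_support P \<subseteq> varying_coords P"
  shows "\<exists>Ps. indecomposable_factorization Ps P"
  using assms
proof (induction "card (varying_coords P)" arbitrary: P rule: less_induct)
  case less
  consider "is_single_point P" | "lattice_indecomposable P"
    | "\<not> is_single_point P" "\<not> lattice_indecomposable P" by blast
  then show ?case
  proof cases
    case 1
    then have "P = direct_product []"
      using is_single_point_eq_zero less.prems(2) by (simp add: direct_product_def)
    then have "indecomposable_factorization [] P"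
      by (simp add: indecomposable_factorization_def disjoint_supports_def)
    then show ?thesis ..
  next
    case 2
    then have "indecomposable_factorization [P] P"
      using less.prems(1)
      by (auto simp: indecomposable_factorization_def direct_product_singleton disjoint_supports_def)
    then show ?thesis ..
  next
    case 3
    then obtain S T where ST: "S \<inter> T = {}" "S \<noteq> {}" "T \<noteq> {}" "varying_coords P = S \<union> T"
      and P: "P = minkowski_sum (coord_proj S ` P) (coord_proj T ` P)"
      using decomposable_zero_one_polytope_split less.prems by metis
    have factor: "\<exists>Ps. indecomposable_factorization Ps (coord_proj U ` P)"
      if "U \<subset> varying_coords P" for U
    proof (rule less.hyps)
      show "card (varying_coords (coord_proj U ` P)) < card (varying_coords P)"
        using that varying_coords_coord_proj[of U P] by (simp add: psubset_card_mono)
      show "zero_one_polytope (coord_proj U ` P)"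
        using less.prems(1) by (rule zero_one_polytope_coord_proj)
      show "coord_support (coord_proj U ` P) \<subseteq> varying_coords (coord_proj U ` P)"
        using that by (intro coord_support_coord_proj_subset_varying_coords) auto
    qed
    obtain PsS PsT where "indecomposable_factorization PsS (coord_proj S ` P)"
      "indecomposable_factorization PsT (coord_proj T ` P)"
      using factor[of S] factor[of T] ST by blast
    moreover have "coord_support (coord_proj S ` P) \<inter> coord_support (coord_proj T ` P) = {}"
      using coord_support_coord_proj[of S P] coord_support_coord_proj[of T P] ST(1) by blast
    moreover have "P \<noteq> {}" using less.prems(1) by (simp add: zero_one_polytope_def)
    ultimately have "indecomposable_factorization (PsS @ PsT) P"
      by (subst P) (intro indecomposable_factorization_append; simp)
    then show ?thesis ..
  qed
qed

lemma translate_coord_proj_varying_coords: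
  assumes "p \<in> A"
  shows "A = (\<lambda>x. coord_proj (- varying_coords A) p + x) ` coord_proj (varying_coords A) ` A"
proof -
  have "coord_proj (- varying_coords A) p + coord_proj (varying_coords A) x = x" if x: "x \<in> A" for x
  proof -
    have "x$i = p$i" if "i \<notin> varying_coords A" for i
      using that x assms unfolding varying_coords_def by blast
    then show ?thesis by (auto simp: vec_eq_iff coord_proj_def)
  qed
  then have "(\<lambda>x. coord_proj (- varying_coords A) p + coord_proj (varying_coords A) x) ` A = (\<lambda>x. x) ` A"
    by (rule image_cong[OF refl])
  then show ?thesis by (simp add: image_image)
qed

theorem lemma4p1:
  fixes P :: "(real^'n) set"
  assumes "zero_one_polytope P"
  shows "\<exists>(t :: real^'n) (Ps :: (real^'n) set list).
           (\<forall>i. t $ i \<in> \<int>) \<and>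
           (\<forall>Q \<in> set Ps. zero_one_polytope Q \<and> lattice_indecomposable Q) \<and>
           disjoint_supports Ps \<and>
           P = (\<lambda>x. t + x) ` direct_product Ps"
proof -
  have "polytope P" "P \<noteq> {}" using assms by (auto simp: zero_one_polytope_def)
  then obtain p where p: "p extreme_point_of P" by (rule extreme_point_exists_polytope)
  define S where "S = varying_coords P"
  define t where "t = coord_proj (- S) p"
  have "p $ i = 0 \<or> p $ i = 1" for i
    using p assms by (simp add: zero_one_polytope_def)
  then have "p $ i \<in> \<int>" for i by (metis Ints_0 Ints_1)
  then have t: "\<forall>i. t $ i \<in> \<int>" by (simp add: t_def coord_proj_def)
  have "coord_support (coord_proj S ` P) \<subseteq> varying_coords (coord_proj S ` P)"
    unfolding S_def by (rule coord_support_coord_proj_subset_varying_coords) (rule order_refl)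
  then obtain Ps where Ps: "indecomposable_factorization Ps (coord_proj S ` P)"
    using zero_one_polytope_indecomposable_factorization[OF zero_one_polytope_coord_proj[OF assms]]
    by blast
  have "p \<in> P" using p by (simp add: extreme_point_of_def)
  then have "P = (\<lambda>x. t + x) ` coord_proj S ` P"
    unfolding S_def t_def by (rule translate_coord_proj_varying_coords)
  also have "coord_proj S ` P = direct_product Ps"
    using Ps by (simp add: indecomposable_factorization_def)
  finally show ?thesis
    using t Ps by (auto simp: indecomposable_factorization_def)
qed

end
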